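(* Let $\mu$ be a (complex or signed) Borel measure on $\mathbb{R}^{k+l}=\mathbb{R}^k\times\mathbb{R}^l$ and let $\alpha>0$. Suppose that $\mu(I\times A)=0$ for every parallelepiped $I\subset\mathbb{R}^k$ and every Borel set $A\subset\mathbb{R}^l$ with $\dim A<\alpha$. Then $\dim\mu\ge\alpha$.
   Context: $\dim A$ denotes Hausdorff dimension. For a measure $\mu$, $\dim\mu=\inf\{\gamma : \text{there is a Borel set } F \text{ with } \mu(F)\ne0 \text{ and } \dim F\le\gamma\}$. *)

theory Defs
  imports "HOL-Analysis.Analysis"
begin

definition hausdorff_pre :: "real \<Rightarrow> real \<Rightarrow> 'a::metric_space set \<Rightarrow> ennreal" where
  "hausdorff_pre s \<delta> A =
     (INF U \<in> {U :: nat \<Rightarrow> 'a set. A \<subseteq> (\<Union>i. U i) \<and> (\<forall>i. bounded (U i) \<and> diameter (U i) \<le> \<delta>)}.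
        (\<Sum>i. ennreal (diameter (U i) powr s)))"

definition hausdorff_measure :: "real \<Rightarrow> 'a::metric_space set \<Rightarrow> ennreal" where
  "hausdorff_measure s A = (SUP \<delta> \<in> {0<..}. hausdorff_pre s \<delta> A)"

definition hausdorff_dim :: "'a::metric_space set \<Rightarrow> ereal" where
  "hausdorff_dim A = Inf {ereal s | s. s > 0 \<and> hausdorff_measure s A = 0}"

definition complex_measure :: "'a measure \<Rightarrow> ('a set \<Rightarrow> complex) \<Rightarrow> bool" where
  "complex_measure M \<mu> \<longleftrightarrow>
     (\<forall>A :: nat \<Rightarrow> 'a set. range A \<subseteq> sets M \<longrightarrow> disjoint_family A \<longrightarrow>
        (\<lambda>n. \<mu> (A n)) sums \<mu> (\<Union>n. A n))"

definition measure_dim :: "'a::metric_space measure \<Rightarrow> ('a set \<Rightarrow> complex) \<Rightarrow> ereal" where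
  "measure_dim M \<mu> =
     Inf {ereal \<gamma> | \<gamma>. \<exists>F \<in> sets M. \<mu> F \<noteq> 0 \<and> hausdorff_dim F \<le> ereal \<gamma>}"

end

theory Submission
  imports Defs
begin

text \<open>If \<open>dim F < \<alpha>\<close>, then \<open>H\<^sup>s(F) = 0\<close> for some \<open>s < \<alpha>\<close>. Projecting almost optimal covers of
  \<open>F\<close> to the second factor (a 1-Lipschitz map) and closing them up yields a Borel set
  \<open>A \<supseteq> snd ` F\<close> all of whose subsets are \<open>H\<^sup>s\<close>-null, hence of dimension \<open>< \<alpha>\<close>. So \<open>\<mu>\<close> vanishes on
  every \<open>I \<times> B\<close> with \<open>I\<close> a box and \<open>B \<subseteq> A\<close> Borel; exhausting the first factor by boxes and
  a Dynkin argument show that \<open>\<mu>\<close> vanishes on all Borel subsets of \<open>UNIV \<times> A\<close>, among them \<open>F\<close>.\<close>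

lemma complex_measure_empty:
  assumes "complex_measure M \<mu>"
  shows "\<mu> {} = 0"
proof -
  have "(\<lambda>n::nat. \<mu> {}) sums \<mu> (\<Union>n::nat. {})"
    using assms unfolding complex_measure_def by (auto simp: disjoint_family_on_def)
  then show ?thesis
    using LIMSEQ_unique summable_LIMSEQ_zero sums_summable tendsto_const by blast
qed

lemma complex_measure_Un:
  assumes \<mu>: "complex_measure M \<mu>" and "P \<in> sets M" "Q \<in> sets M" "P \<inter> Q = {}"
  shows "\<mu> (P \<union> Q) = \<mu> P + \<mu> Q"
proof -
  define A where "A i = (if i = 0 then P else if i = 1 then Q else {})" for i :: nat
  have "(\<lambda>n. \<mu> (A n)) sums \<mu> (\<Union>n. A n)"
    using assms unfolding complex_measure_def
    by (elim allE[of _ A]) (auto simp: A_def disjoint_family_on_def split: if_splits)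
  moreover have "(\<lambda>n. \<mu> (A n)) sums (\<Sum>n\<in>{0,1}. \<mu> (A n))"
    by (rule sums_finite) (auto simp: A_def complex_measure_empty[OF \<mu>])
  moreover have "(\<Union>n. A n) = P \<union> Q"
    by (auto simp: A_def split: if_splits)
  ultimately show ?thesis
    by (simp add: sums_unique2 A_def)
qed

lemma complex_measure_Diff:
  assumes "complex_measure M \<mu>" "P \<in> sets M" "Q \<in> sets M" "Q \<subseteq> P"
  shows "\<mu> (P - Q) = \<mu> P - \<mu> Q"
proof -
  have "\<mu> ((P - Q) \<union> Q) = \<mu> (P - Q) + \<mu> Q"
    using assms by (intro complex_measure_Un) auto
  moreover have "(P - Q) \<union> Q = P"
    using assms(4) by blast
  ultimately show ?thesis
    by simp
qed

lemma complex_measure_UN_eq_0: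
  fixes A :: "nat \<Rightarrow> 'a set"
  assumes "complex_measure M \<mu>" "range A \<subseteq> sets M" "disjoint_family A" "\<And>n. \<mu> (A n) = 0"
  shows "\<mu> (\<Union>n. A n) = 0"
proof -
  have "(\<lambda>n. \<mu> (A n)) sums \<mu> (\<Union>n. A n)"
    using assms(1-3) unfolding complex_measure_def by blast
  then have "(\<lambda>n. 0) sums \<mu> (\<Union>n. A n)"
    using assms(4) by simp
  then show ?thesis
    using sums_unique2 sums_zero by blast
qed

lemma complex_measure_incseq_eq_0:
  assumes \<mu>: "complex_measure M \<mu>" and S: "incseq S" "range S \<subseteq> sets M" "\<And>n. \<mu> (S n) = 0"
  shows "\<mu> (\<Union>n. S n) = 0"
proof -
  have "\<mu> (disjointed S n) = 0" for n
  proof (cases n)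
    case (Suc m)
    then show ?thesis
      using S complex_measure_Diff[OF \<mu>] by (auto simp: disjointed_mono incseq_SucD)
  qed (use S in simp)
  then have "\<mu> (\<Union>n. disjointed S n) = 0"
    using S by (intro complex_measure_UN_eq_0[OF \<mu>] sets.range_disjointed_sets disjoint_family_disjointed)
  then show ?thesis
    by (simp add: UN_disjointed_eq)
qed

lemma complex_measure_restrict:
  assumes "complex_measure M \<mu>" "X \<in> sets M"
  shows "complex_measure M (\<lambda>E. \<mu> (E \<inter> X))"
  unfolding complex_measure_def
proof (intro allI impI)
  fix A :: "nat \<Rightarrow> _" assume "range A \<subseteq> sets M" "disjoint_family A"
  then have "range (\<lambda>n. A n \<inter> X) \<subseteq> sets M" "disjoint_family (\<lambda>n. A n \<inter> X)"
    using assms(2) by (auto simp: disjoint_family_on_def)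
  then have "(\<lambda>n. \<mu> (A n \<inter> X)) sums \<mu> (\<Union>n. A n \<inter> X)"
    using assms(1) unfolding complex_measure_def by blast
  moreover have "(\<Union>n. A n \<inter> X) = (\<Union>n. A n) \<inter> X"
    by blast
  ultimately show "(\<lambda>n. \<mu> (A n \<inter> X)) sums \<mu> ((\<Union>n. A n) \<inter> X)"
    by simp
qed

lemma complex_measure_eq_0_generator:
  assumes \<mu>: "complex_measure M \<mu>" and M: "sets M = sigma_sets \<Omega> G"
    and G: "Int_stable G" "G \<subseteq> Pow \<Omega>"
    and \<Omega>: "\<mu> \<Omega> = 0" and zero: "\<And>E. E \<in> G \<Longrightarrow> \<mu> E = 0"
    and E: "E \<in> sets M"
  shows "\<mu> E = 0"
  using G E[unfolded M]
proof (induction rule: sigma_sets_induct_disjoint)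
  case (compl A)
  have "\<Omega> \<in> sets M" "A \<in> sets M" "A \<subseteq> \<Omega>"
    using M compl(1) sigma_sets_top sigma_sets_into_sp[OF G(2)] by auto
  then show ?case
    using compl(2) \<Omega> complex_measure_Diff[OF \<mu>] by simp
next
  case (union A)
  then show ?case
    using M by (intro complex_measure_UN_eq_0[OF \<mu>]) auto
qed (simp_all add: zero complex_measure_empty[OF \<mu>])

lemma borel_eq_cbox:
  "borel = sigma UNIV (range (\<lambda>(a, b). cbox a b :: 'a::euclidean_space set))"
proof (rule borel_eq_sigmaI1[OF borel_def])
  let ?G = "range (\<lambda>(a, b). cbox a b) :: 'a set set"
  fix M :: "'a set"
  assume "M \<in> {S. open S}"
  then obtain \<D> where \<D>: "countable \<D>" "\<And>X. X \<in> \<D> \<Longrightarrow> \<exists>a b. X = cbox a b" "\<Union>\<D> = M"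
    using open_countable_Union_open_cbox[of M] by (metis mem_Collect_eq)
  have "\<D> \<subseteq> ?G"
  proof
    fix X
    assume "X \<in> \<D>"
    then obtain a b where "X = cbox a b"
      using \<D>(2) by blast
    then show "X \<in> ?G"
      by (intro image_eqI[of _ _ "(a, b)"]) simp_all
  qed
  then have "\<Union>\<D> \<in> sigma_sets UNIV ?G"
    by (intro sigma_algebra.countable_Union[OF sigma_algebra_sigma_sets] \<D>(1)) (auto intro: sigma_sets.Basic)
  then show "M \<in> sets (sigma UNIV ?G)"
    by (simp add: \<D>(3))
qed auto

lemma sets_borel_eq_sigma_sets_cbox:
  "sets borel = sigma_sets UNIV (range (\<lambda>(a, b). cbox a b :: 'a::euclidean_space set))"
proof -
  have "range (\<lambda>(a, b). cbox a b) \<subseteq> Pow (UNIV :: 'a set)"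
    by simp
  then show ?thesis
    unfolding borel_eq_cbox[where 'a = 'a] by (rule sets_measure_of)
qed

lemma range_cbox_iff: "X \<in> range (\<lambda>(a, b). cbox a b) \<longleftrightarrow> (\<exists>a b. X = cbox a b)"
proof
  assume "X \<in> range (\<lambda>(a, b). cbox a b)"
  then obtain p where "X = (\<lambda>(a, b). cbox a b) p"
    by (rule rangeE)
  then have "X = cbox (fst p) (snd p)"
    by (simp add: split_beta)
  then show "\<exists>a b. X = cbox a b"
    by blast
next
  assume "\<exists>a b. X = cbox a b"
  then obtain a b where "X = cbox a b"
    by blast
  then show "X \<in> range (\<lambda>(a, b). cbox a b)"
    by (intro image_eqI[of _ _ "(a, b)"]) simp_all
qed

lemma Int_stable_cbox: "Int_stable (range (\<lambda>(a, b). cbox a b :: 'a::euclidean_space set))"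
  unfolding Int_stable_def range_cbox_iff by (auto simp: Int_interval)

lemma incseq_cbox_One: "incseq (\<lambda>i::nat. cbox (- (real i *\<^sub>R One)) (real i *\<^sub>R One :: 'a::euclidean_space))"
  by (intro monoI subset_box_imp) auto

lemma UN_cbox_eq_UNIV: "(\<Union>i::nat. cbox (- (real i *\<^sub>R One)) (real i *\<^sub>R One)) = (UNIV :: 'a::euclidean_space set)"
proof -
  have "x \<in> (\<Union>i::nat. box (- (real i *\<^sub>R One)) (real i *\<^sub>R One))" for x :: 'a
    by (simp only: UN_box_eq_UNIV UNIV_I)
  then show ?thesis
    using box_subset_cbox by blast
qed

lemma complex_measure_eq_0_on_cylinder:
  fixes \<mu> :: "('a::euclidean_space \<times> 'b::euclidean_space) set \<Rightarrow> complex"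
  assumes \<mu>: "complex_measure borel \<mu>" and A: "A \<in> sets borel"
    and zero: "\<And>a b B. B \<in> sets borel \<Longrightarrow> B \<subseteq> A \<Longrightarrow> \<mu> (cbox a b \<times> B) = 0"
    and F: "F \<in> sets borel"
  shows "\<mu> (F \<inter> (UNIV \<times> A)) = 0"
proof -
  let ?X = "UNIV \<times> A :: ('a \<times> 'b) set"
  have X: "?X \<in> sets borel"
    using A by (intro borel_Times) auto
  define C where "C i = cbox (- (real i *\<^sub>R One)) (real i *\<^sub>R One :: 'a) \<times> A" for i :: nat
  have "incseq C"
  proof (rule monoI)
    fix m n :: nat
    assume "m \<le> n"
    then show "C m \<subseteq> C n"
      using incseq_cbox_One[THEN monoD, of m n] unfolding C_def by blast
  qed
  moreover have "C i \<in> sets borel" for i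
    unfolding C_def using A by (intro borel_Times) auto
  moreover have "\<mu> (C i) = 0" for i
    unfolding C_def by (rule zero[OF A order_refl])
  ultimately have "\<mu> (\<Union>i. C i) = 0"
    by (intro complex_measure_incseq_eq_0[OF \<mu>]) auto
  moreover have "(\<Union>i. C i) = UNIV \<inter> ?X"
  proof -
    have "\<exists>i. x \<in> cbox (- (real i *\<^sub>R One)) (real i *\<^sub>R One)" for x :: 'a
      using UN_cbox_eq_UNIV[where 'a = 'a] by blast
    then show ?thesis
      unfolding C_def by auto
  qed
  ultimately have "\<mu> (UNIV \<inter> ?X) = 0"
    by simp
  moreover have "\<mu> (E \<inter> ?X) = 0" if E: "E \<in> range (\<lambda>(a, b). cbox a b)" for E
  proof -
    obtain p q where "E = cbox p q"
      using E unfolding range_cbox_iff by blast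
    then have "E \<inter> ?X = cbox (fst p) (fst q) \<times> (cbox (snd p) (snd q) \<inter> A)"
      using cbox_Pair_eq[of "fst p" "snd p" "fst q" "snd q"] by auto
    then show ?thesis
      using A zero by simp
  qed
  ultimately show ?thesis
    by (intro complex_measure_eq_0_generator[OF complex_measure_restrict[OF \<mu> X]
        sets_borel_eq_sigma_sets_cbox Int_stable_cbox _ _ _ F]) simp_all
qed

lemma hausdorff_pre_eq_0:
  assumes "hausdorff_measure s F = 0" "\<delta> > 0"
  shows "hausdorff_pre s \<delta> F = 0"
proof -
  have "hausdorff_pre s \<delta> F \<le> hausdorff_measure s F"
    unfolding hausdorff_measure_def using assms(2) by (intro SUP_upper) auto
  then show ?thesis
    using assms(1) by simp
qed

lemma hausdorff_measure_eq_0I: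
  assumes "\<And>\<delta> e. \<delta> > 0 \<Longrightarrow> e > 0 \<Longrightarrow> hausdorff_pre s \<delta> B \<le> ennreal e"
  shows "hausdorff_measure s B = 0"
proof -
  have "hausdorff_pre s \<delta> B = 0" if "\<delta> > 0" for \<delta>
  proof -
    have "hausdorff_pre s \<delta> B \<le> 0"
      by (rule ennreal_le_epsilon) (use assms[OF that] in simp)
    then show ?thesis
      by simp
  qed
  then show ?thesis
    unfolding hausdorff_measure_def by simp
qed

lemma hausdorff_pre_le_cover:
  assumes "B \<subseteq> (\<Union>i. U i)" "\<And>i. bounded (U i)" "\<And>i. diameter (U i) \<le> \<delta>"
  shows "hausdorff_pre s \<delta> B \<le> (\<Sum>i. ennreal (diameter (U i) powr s))"
  unfolding hausdorff_pre_def using assms by (intro INF_lower) auto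

lemma hausdorff_pre_less_cover:
  assumes "hausdorff_pre s \<delta> F < e"
  shows "\<exists>U. F \<subseteq> (\<Union>i. U i) \<and> (\<forall>i. bounded (U i) \<and> diameter (U i) \<le> \<delta>) \<and>
    (\<Sum>i. ennreal (diameter (U i) powr s)) < e"
  using assms unfolding hausdorff_pre_def INF_less_iff by blast

lemma hausdorff_null_coversE:
  assumes "hausdorff_measure s F = 0"
  obtains U :: "nat \<Rightarrow> nat \<Rightarrow> 'a::metric_space set"
  where "\<And>n. F \<subseteq> (\<Union>i. U n i)" "\<And>n i. bounded (U n i)" "\<And>n i. diameter (U n i) \<le> 1 / Suc n"
    "\<And>n. (\<Sum>i. ennreal (diameter (U n i) powr s)) < ennreal (1 / Suc n)"
proof -
  have "\<forall>n. \<exists>U. F \<subseteq> (\<Union>i. U i) \<and> (\<forall>i. bounded (U i) \<and> diameter (U i) \<le> 1 / Suc n) \<and>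
      (\<Sum>i. ennreal (diameter (U i) powr s)) < ennreal (1 / Suc n)"
    using hausdorff_pre_eq_0[OF assms] by (intro allI hausdorff_pre_less_cover) simp
  then obtain U where U: "\<forall>n. F \<subseteq> (\<Union>i. U n i) \<and> (\<forall>i. bounded (U n i) \<and> diameter (U n i) \<le> 1 / Suc n) \<and>
      (\<Sum>i. ennreal (diameter (U n i) powr s)) < ennreal (1 / Suc n)"
    by (rule choice[THEN exE])
  show ?thesis
    by (rule that[of U]) (use U in auto)
qed

lemma
  fixes f :: "'a::heine_borel \<Rightarrow> 'b::metric_space"
  assumes f: "1-lipschitz_on UNIV f" and S: "bounded S"
  shows compact_lipschitz_image_closure: "compact (f ` closure S)"
    and diameter_lipschitz_image_closure: "diameter (f ` closure S) \<le> diameter S"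
proof -
  show "compact (f ` closure S)"
    using S lipschitz_on_continuous_on[OF f]
    by (intro compact_continuous_image) (auto intro: continuous_on_subset)
  have bound: "dist (f x) (f y) \<le> diameter S" if "x \<in> closure S" "y \<in> closure S" for x y
    using lipschitz_onD[OF f, of x y] diameter_bounded_bound[of "closure S" x y] that S
    by (simp add: diameter_closure bounded_closure)
  show "diameter (f ` closure S) \<le> diameter S"
  proof (cases "S = {}")
    case False
    then show ?thesis
      using bound unfolding diameter_def[of "f ` closure S"] by (auto intro!: cSUP_least)
  qed simp
qed

lemma lipschitz_image_hausdorff_null_borel_hull:
  fixes f :: "'a::heine_borel \<Rightarrow> 'b::metric_space"
  assumes f: "1-lipschitz_on UNIV f" and s: "s \<ge> 0" and F: "hausdorff_measure s F = 0"
  obtains A where "A \<in> sets borel" "f ` F \<subseteq> A" "\<And>B. B \<subseteq> A \<Longrightarrow> hausdorff_measure s B = 0"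
proof -
  obtain U where U: "\<And>n. F \<subseteq> (\<Union>i. U n i)" "\<And>n i. bounded (U n i)"
    "\<And>n i. diameter (U n i) \<le> 1 / Suc n"
    "\<And>n. (\<Sum>i. ennreal (diameter (U n i) powr s)) < ennreal (1 / Suc n)"
    using hausdorff_null_coversE[OF F] by blast
  define V where "V n i = f ` closure (U n i)" for n i
  have V: "compact (V n i)" "diameter (V n i) \<le> diameter (U n i)" for n i
    unfolding V_def using f U(2)
    by (rule compact_lipschitz_image_closure, rule diameter_lipschitz_image_closure)
  define A where "A = (\<Inter>n. \<Union>i. V n i)"
  have "V n i \<in> sets borel" for n i
    using V(1) compact_imp_closed borel_closed by blast
  then have "A \<in> sets borel"
    unfolding A_def by (intro sets.countable_INT sets.countable_UN) auto
  moreover have "f ` F \<subseteq> A"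
  proof
    fix y
    assume "y \<in> f ` F"
    then obtain x where x: "x \<in> F" and y: "y = f x"
      by (rule imageE)
    have "y \<in> (\<Union>i. V n i)" for n
    proof -
      obtain i where "x \<in> U n i"
        using U(1)[of n] x by blast
      then have "x \<in> closure (U n i)"
        by (rule rev_subsetD[OF _ closure_subset])
      then show ?thesis
        unfolding V_def y by (intro UN_I[of i] imageI) auto
    qed
    then show "y \<in> A"
      unfolding A_def by (intro InterI) auto
  qed
  moreover have "hausdorff_measure s B = 0" if B: "B \<subseteq> A" for B
  proof (rule hausdorff_measure_eq_0I)
    fix \<delta> e :: real
    assume "\<delta> > 0" "e > 0"
    then obtain n :: nat where "1 / Suc n < min e \<delta>"
      by (metis min_less_iff_conj nat_approx_posE)
    then have n: "1 / Suc n < e" "1 / Suc n < \<delta>"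
      by auto
    have "B \<subseteq> (\<Union>i. V n i)"
      using B unfolding A_def by blast
    moreover have "bounded (V n i)" for i
      using V(1) by (rule compact_imp_bounded)
    moreover have "diameter (V n i) \<le> \<delta>" for i
      using V(2)[of n i] U(3)[of n i] n(2) by linarith
    ultimately have "hausdorff_pre s \<delta> B \<le> (\<Sum>i. ennreal (diameter (V n i) powr s))"
      by (rule hausdorff_pre_le_cover)
    also have "\<dots> \<le> (\<Sum>i. ennreal (diameter (U n i) powr s))"
    proof (rule suminf_le[OF _ summableI summableI])
      fix i
      have "0 \<le> diameter (V n i)"
        using V(1) compact_imp_bounded diameter_ge_0 by blast
      then show "ennreal (diameter (V n i) powr s) \<le> ennreal (diameter (U n i) powr s)"
        using V(2) s by (intro ennreal_leI powr_mono2) auto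
    qed
    also have "\<dots> \<le> ennreal (1 / Suc n)"
      using U(4)[of n] by simp
    also have "\<dots> \<le> ennreal e"
      using n(1) by (intro ennreal_leI) simp
    finally show "hausdorff_pre s \<delta> B \<le> ennreal e" .
  qed
  ultimately show ?thesis
    using that by blast
qed

lemma hausdorff_dim_lessE:
  assumes "hausdorff_dim F < ereal \<alpha>"
  obtains s where "0 < s" "s < \<alpha>" "hausdorff_measure s F = 0"
  using assms unfolding hausdorff_dim_def Inf_less_iff by auto

lemma hausdorff_dim_le:
  assumes "0 < s" "hausdorff_measure s F = 0"
  shows "hausdorff_dim F \<le> ereal s"
  unfolding hausdorff_dim_def using assms by (intro Inf_lower) auto

lemma complex_measure_eq_0_if_hausdorff_dim_less:
  fixes \<mu> :: "('a::euclidean_space \<times> 'b::euclidean_space) set \<Rightarrow> complex"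
  assumes \<mu>: "complex_measure borel \<mu>"
    and zero: "\<And>a b A. A \<in> sets borel \<Longrightarrow> hausdorff_dim A < ereal \<alpha> \<Longrightarrow> \<mu> (cbox a b \<times> A) = 0"
    and F: "F \<in> sets borel" "hausdorff_dim F < ereal \<alpha>"
  shows "\<mu> F = 0"
proof -
  obtain s where s: "0 < s" "s < \<alpha>" "hausdorff_measure s F = 0"
    using F(2) by (rule hausdorff_dim_lessE)
  have "1-lipschitz_on UNIV (snd :: 'a \<times> 'b \<Rightarrow> 'b)"
    by (intro lipschitz_onI) (auto simp: dist_snd_le)
  from lipschitz_image_hausdorff_null_borel_hull[OF this less_imp_le[OF s(1)] s(3)]
  obtain A where A: "A \<in> sets borel" "snd ` F \<subseteq> A" "\<And>B. B \<subseteq> A \<Longrightarrow> hausdorff_measure s B = 0"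
    by blast
  have "\<mu> (F \<inter> (UNIV \<times> A)) = 0"
  proof (rule complex_measure_eq_0_on_cylinder[OF \<mu> A(1) _ F(1)])
    fix a b B
    assume B: "B \<in> sets borel" "B \<subseteq> A"
    have "hausdorff_dim B \<le> ereal s"
      using s(1) A(3)[OF B(2)] by (rule hausdorff_dim_le)
    also have "\<dots> < ereal \<alpha>"
      using s(2) by simp
    finally show "\<mu> (cbox a b \<times> B) = 0"
      using zero B(1) by blast
  qed
  moreover have "F \<inter> (UNIV \<times> A) = F"
    using A(2) by auto
  ultimately show ?thesis
    by simp
qed

theorem mainTheorem5:
  fixes \<mu> :: "((real,'k::finite) vec \<times> (real,'l::finite) vec) set \<Rightarrow> complex" and \<alpha> :: real
  assumes "complex_measure borel \<mu>"
    and "\<alpha> > 0"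
    and "\<And>(a :: real^'k) b (A :: (real^'l) set).
           A \<in> sets borel \<Longrightarrow> hausdorff_dim A < ereal \<alpha> \<Longrightarrow> \<mu> (cbox a b \<times> A) = 0"
  shows "measure_dim borel \<mu> \<ge> ereal \<alpha>"
  unfolding measure_dim_def
proof (rule Inf_greatest, clarify)
  fix \<gamma> F
  assume F: "F \<in> sets borel" "\<mu> F \<noteq> 0" "hausdorff_dim F \<le> ereal \<gamma>"
  show "ereal \<alpha> \<le> ereal \<gamma>"
  proof (rule ccontr)
    assume "\<not> ereal \<alpha> \<le> ereal \<gamma>"
    with F(3) have "hausdorff_dim F < ereal \<alpha>"
      by (simp add: not_le le_less_trans)
    with complex_measure_eq_0_if_hausdorff_dim_less[OF assms(1) assms(3) F(1)] F(2) show False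
      by blast
  qed
qed

end
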